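(* Let $\mathcal{S}$ be a discrete subgroup of $O(n+1)$. Then $\mathcal{S}$ satisfies the spanning property if and only if it satisfies the bounded ratio condition $$\sup_{a\in\mathbb{S}^n}\gamma_a<\infty,\qquad \gamma_a:=\max_{\mathbb{S}^n}h_a\Big/\min_{\mathbb{S}^n}h_a,$$ where $h_a$ is the support function of $P_a=\mathrm{conv}\{\phi(a):\phi\in\mathcal{S}\}$.
   Context: The spanning property: for every $a\in\mathbb{S}^n$, $P_a$ is a non-degenerate $(n+1)$-dimensional polytope in $\mathbb{R}^{n+1}$. The support function of a compact convex set $K$ is $h(x)=\max\{z\cdot x:z\in K\}$, $x\in\mathbb{S}^n$. *)

theory Defs
  imports "HOL-Analysis.Analysis"
begin

text \<open>Orthogonal group O(n+1) realised as orthogonal matrices acting on real^'n,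
  where CARD('n) = n+1.\<close>
definition orth_subgroup :: "(real^'n^'n) set \<Rightarrow> bool" where
  "orth_subgroup S \<longleftrightarrow> S \<subseteq> {A. orthogonal_matrix A} \<and> mat 1 \<in> S \<and>
     (\<forall>A\<in>S. \<forall>B\<in>S. A ** B \<in> S) \<and> (\<forall>A\<in>S. matrix_inv A \<in> S)"

definition support_function :: "(real^'n) set \<Rightarrow> real^'n \<Rightarrow> real" where
  "support_function K x = Sup ((\<lambda>z. z \<bullet> x) ` K)"

definition orbit_polytope :: "(real^'n^'n) set \<Rightarrow> real^'n \<Rightarrow> (real^'n) set" where
  "orbit_polytope S a = convex hull ((\<lambda>A. A *v a) ` S)"

definition spanning_property :: "(real^'n^'n) set \<Rightarrow> bool" where
  "spanning_property S \<longleftrightarrow> (\<forall>a \<in> sphere 0 1.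
     polytope (orbit_polytope S a) \<and> aff_dim (orbit_polytope S a) = int CARD('n))"

text \<open>gamma_a = max_{S^n} h_a / min_{S^n} h_a, meaningful (finite) only when min h_a > 0.\<close>
definition gamma_ratio :: "(real^'n^'n) set \<Rightarrow> real^'n \<Rightarrow> real" where
  "gamma_ratio S a =
     Sup (support_function (orbit_polytope S a) ` sphere 0 1) /
     Inf (support_function (orbit_polytope S a) ` sphere 0 1)"

definition bounded_ratio_condition :: "(real^'n^'n) set \<Rightarrow> bool" where
  "bounded_ratio_condition S \<longleftrightarrow> (\<exists>M::real. \<forall>a \<in> sphere 0 1.
     Inf (support_function (orbit_polytope S a) ` sphere 0 1) > 0 \<and> gamma_ratio S a \<le> M)"

end

theory Submission
  imports Defs
begin

text \<open>
  A discrete subgroup S of the compact group O(n+1) is finite, so the support function of P_a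
  is h_a(x) = max {(A a) \<bullet> x : A \<in> S}: jointly continuous in (a, x) and bounded by 1 on the
  sphere. P_a is full-dimensional iff h_a > 0 on the sphere. The centroid of the orbit of a is
  fixed by S, so if it were nonzero the orbit would lie in a hyperplane orthogonal to it; for
  full-dimensional P_a it therefore vanishes, the values (A a) \<bullet> x sum to 0, and they cannot
  all be \<le> 0 unless the orbit lies in the hyperplane orthogonal to x. Conversely, an orbit
  inside u \<bullet> z = b gives h_a(v) = -h_a(-v) for v = u/|u|. Compactness of the product of two
  spheres makes the positivity uniform, h_a \<ge> \<delta> > 0, whence \<gamma>_a \<le> 1/\<delta>.
\<close>

lemma orthogonal_matrix_inner:
  fixes A :: "real^'n^'n"
  assumes "orthogonal_matrix A"
  shows "(A *v x) \<bullet> (A *v y) = x \<bullet> y"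
  using assms orthogonal_transformation_matrix[of "(*v) A"]
  by (simp add: orthogonal_transformation_def matrix_vector_mul_linear)

lemma orthogonal_matrix_norm:
  fixes A :: "real^'n^'n"
  assumes "orthogonal_matrix A"
  shows "norm (A *v x) = norm x"
  using orthogonal_matrix_inner[OF assms, of x x] by (simp add: norm_eq_sqrt_inner)

lemma matrix_inv_orthogonal:
  fixes A :: "real^'n^'n"
  assumes "orthogonal_matrix A"
  shows "matrix_inv A = transpose A"
proof -
  have "\<exists>A'. A ** A' = mat 1 \<and> A' ** A = mat 1"
    using assms by (auto simp: orthogonal_matrix_def)
  then have "A ** matrix_inv A = mat 1"
    unfolding matrix_inv_def by (rule someI_ex[THEN conjunct1])
  then have "transpose A ** A ** matrix_inv A = transpose A"
    by (simp flip: matrix_mul_assoc)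
  then show ?thesis using assms by (simp add: orthogonal_matrix_def)
qed

lemma row_matrix_mul:
  fixes A M :: "'a::comm_semiring_1^'n^'n"
  shows "(M ** A) $ i = transpose A *v (M $ i)"
  by (simp add: vec_eq_iff matrix_matrix_mult_def matrix_vector_mult_def transpose_def ac_simps)

lemma dist_matrix_mul_orthogonal:
  fixes A M N :: "real^'n^'n"
  assumes "orthogonal_matrix A"
  shows "dist (M ** A) (N ** A) = dist M N"
proof -
  have "dist ((M ** A) $ i) ((N ** A) $ i) = dist (M $ i) (N $ i)" for i
    using orthogonal_matrix_norm[of "transpose A" "M $ i - N $ i"] assms
    by (simp add: row_matrix_mul dist_norm matrix_vector_mult_diff_distrib)
  then show ?thesis by (simp add: dist_vec_def)
qed

lemma orth_subgroup_orthogonal: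
  "orth_subgroup S \<Longrightarrow> A \<in> S \<Longrightarrow> orthogonal_matrix A"
  unfolding orth_subgroup_def by auto

lemma orth_subgroup_one: "orth_subgroup S \<Longrightarrow> mat 1 \<in> S"
  unfolding orth_subgroup_def by auto

lemma orth_subgroup_mult: "orth_subgroup S \<Longrightarrow> A \<in> S \<Longrightarrow> B \<in> S \<Longrightarrow> A ** B \<in> S"
  unfolding orth_subgroup_def by auto

lemma orth_subgroup_transpose: "orth_subgroup S \<Longrightarrow> A \<in> S \<Longrightarrow> transpose A \<in> S"
  unfolding orth_subgroup_def by (metis matrix_inv_orthogonal mem_Collect_eq subsetD)

lemma orth_subgroup_bounded:
  fixes S :: "(real^'n^'n) set"
  assumes "orth_subgroup S"
  shows "S \<subseteq> cball 0 (norm (mat 1 :: real^'n^'n))"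
proof
  fix A assume "A \<in> S"
  then have "dist (mat 1 ** A) (0 ** A) = dist (mat 1) (0 :: real^'n^'n)"
    using assms by (intro dist_matrix_mul_orthogonal orth_subgroup_orthogonal)
  then show "A \<in> cball 0 (norm (mat 1 :: real^'n^'n))"
    by (simp add: dist_norm)
qed

lemma orth_subgroup_uniformly_discrete:
  fixes S :: "(real^'n^'n) set"
  assumes G: "orth_subgroup S" and "discrete S"
  obtains d where "d > 0" "\<And>A B. A \<in> S \<Longrightarrow> B \<in> S \<Longrightarrow> dist B A < d \<Longrightarrow> B = A"
proof -
  have "mat 1 isolated_in S"
    using assms orth_subgroup_one by (auto simp: discrete_def)
  then obtain d where d: "d > 0" "\<And>C. C \<in> S \<Longrightarrow> dist (mat 1) C < d \<Longrightarrow> C = mat 1"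
    using isolated_inE_dist by blast
  show thesis
  proof (rule that[OF d(1)])
    fix A B assume AB: "A \<in> S" "B \<in> S" "dist B A < d"
    have oA: "orthogonal_matrix (transpose A)"
      using G AB orth_subgroup_orthogonal by simp
    have "dist (mat 1) (B ** transpose A) = dist (A ** transpose A) (B ** transpose A)"
      using oA by (simp add: orthogonal_matrix_def)
    also have "\<dots> = dist B A"
      using dist_matrix_mul_orthogonal[OF oA] by (simp add: dist_commute)
    finally have "B ** transpose A = mat 1"
      using d AB G by (simp add: orth_subgroup_mult orth_subgroup_transpose)
    then have "B ** transpose A ** A = A" by simp
    with oA show "B = A"
      by (simp add: orthogonal_matrix_def flip: matrix_mul_assoc)
  qed
qed

lemma finite_discrete_orth_subgroup:
  fixes S :: "(real^'n^'n) set"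
  assumes "orth_subgroup S" and "discrete S"
  shows "finite S"
proof -
  obtain d where "d > 0" "\<And>A B. A \<in> S \<Longrightarrow> B \<in> S \<Longrightarrow> dist B A < d \<Longrightarrow> B = A"
    using orth_subgroup_uniformly_discrete[OF assms] by blast
  then have "\<not> L islimpt S" for L
    by (rule discrete_imp_not_islimpt)
  then show "finite S"
    using Heine_Borel_imp_Bolzano_Weierstrass[OF compact_cball] orth_subgroup_bounded[OF assms(1)]
    by blast
qed

lemma orth_subgroup_mult_left_bij:
  assumes "orth_subgroup S" "B \<in> S"
  shows "bij_betw ((**) B) S S"
proof (rule bij_betwI[where g = "(**) (transpose B)"])
  have "orthogonal_matrix B"
    using assms by (rule orth_subgroup_orthogonal)
  then show "transpose B ** (B ** X) = X" "B ** (transpose B ** X) = X" for X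
    by (simp_all add: matrix_mul_assoc orthogonal_matrix_def)
qed (use assms in \<open>auto intro: orth_subgroup_mult orth_subgroup_transpose\<close>)

lemma orbit_sum_invariant:
  fixes S :: "(real^'n^'n) set"
  assumes "orth_subgroup S" "B \<in> S"
  shows "B *v (\<Sum>A\<in>S. A *v a) = (\<Sum>A\<in>S. A *v a)"
proof -
  have "B *v (\<Sum>A\<in>S. A *v a) = (\<Sum>A\<in>S. (B ** A) *v a)"
    by (simp add: linear_sum[OF matrix_vector_mul_linear] matrix_vector_mul_assoc)
  also have "\<dots> = (\<Sum>A\<in>S. A *v a)"
    using sum.reindex_bij_betw[OF orth_subgroup_mult_left_bij[OF assms], of "\<lambda>A. A *v a"] .
  finally show ?thesis .
qed

lemma support_function_convex_hull:
  fixes V :: "(real^'n) set"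
  assumes "finite V" "V \<noteq> {}"
  shows "support_function (convex hull V) x = Max ((\<lambda>z. z \<bullet> x) ` V)"
proof -
  let ?M = "Max ((\<lambda>z. z \<bullet> x) ` V)"
  have "convex {z. z \<bullet> x \<le> ?M}"
    using convex_halfspace_le[of x ?M] by (simp add: inner_commute)
  then have "convex hull V \<subseteq> {z. z \<bullet> x \<le> ?M}"
    using assms by (intro hull_minimal) auto
  moreover have "?M \<in> (\<lambda>z. z \<bullet> x) ` V"
    using assms by simp
  ultimately show ?thesis
    unfolding support_function_def using hull_subset[of V convex]
    by (intro cSup_eq_maximum) auto
qed

definition orbit_support :: "(real^'n^'n) set \<Rightarrow> real^'n \<Rightarrow> real^'n \<Rightarrow> real" where
  "orbit_support S a x = Max ((\<lambda>A. (A *v a) \<bullet> x) ` S)"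

lemma support_function_orbit_polytope:
  assumes "finite S" "S \<noteq> {}"
  shows "support_function (orbit_polytope S a) = orbit_support S a"
proof
  fix x
  have "support_function (orbit_polytope S a) x = Max ((\<lambda>z. z \<bullet> x) ` (\<lambda>A. A *v a) ` S)"
    unfolding orbit_polytope_def using assms by (intro support_function_convex_hull) auto
  then show "support_function (orbit_polytope S a) x = orbit_support S a x"
    by (simp add: orbit_support_def image_image)
qed

lemma aff_dim_convex_hull_eq_full:
  fixes V :: "'a::euclidean_space set"
  shows "aff_dim (convex hull V) = DIM('a) \<longleftrightarrow> (\<forall>u b. V \<subseteq> {z. u \<bullet> z = b} \<longrightarrow> u = 0)"
proof
  assume full: "aff_dim (convex hull V) = DIM('a)"
  show "\<forall>u b. V \<subseteq> {z. u \<bullet> z = b} \<longrightarrow> u = 0"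
  proof (intro allI impI)
    fix u b assume V: "V \<subseteq> {z. u \<bullet> z = b}"
    show "u = 0"
    proof (rule ccontr)
      assume "u \<noteq> 0"
      with V have "aff_dim V \<le> DIM('a) - 1"
        using aff_dim_subset[of V "{z. u \<bullet> z = b}"] by simp
      with full show False by (simp add: aff_dim_convex_hull)
    qed
  qed
next
  assume flat: "\<forall>u b. V \<subseteq> {z. u \<bullet> z = b} \<longrightarrow> u = 0"
  show "aff_dim (convex hull V) = DIM('a)"
  proof (rule ccontr)
    assume "aff_dim (convex hull V) \<noteq> DIM('a)"
    then have "aff_dim (convex hull V) < DIM('a)"
      using aff_dim_le_DIM[of "convex hull V"] by linarith
    then obtain u b where "u \<noteq> 0" "convex hull V \<subseteq> {z. u \<bullet> z = b}"
      by (rule aff_lowdim_subset_hyperplane)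
    with flat show False
      using hull_subset[of V convex] by blast
  qed
qed

lemma orbit_polytope_full_dim_iff:
  fixes S :: "(real^'n^'n) set"
  shows "aff_dim (orbit_polytope S a) = CARD('n) \<longleftrightarrow>
    (\<forall>u b. (\<forall>A\<in>S. u \<bullet> (A *v a) = b) \<longrightarrow> u = 0)"
  using aff_dim_convex_hull_eq_full[of "(\<lambda>A. A *v a) ` S"]
  by (simp add: orbit_polytope_def image_subset_iff)

lemma orbit_sum_eq_0:
  fixes S :: "(real^'n^'n) set"
  assumes G: "orth_subgroup S" and full: "aff_dim (orbit_polytope S a) = CARD('n)"
  shows "(\<Sum>A\<in>S. A *v a) = 0"
proof -
  define c where "c = (\<Sum>A\<in>S. A *v a)"
  have "c \<bullet> (A *v a) = c \<bullet> a" if "A \<in> S" for A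
  proof -
    have "c \<bullet> (A *v a) = (A *v c) \<bullet> (A *v a)"
      using orbit_sum_invariant[OF G that] by (simp add: c_def)
    also have "\<dots> = c \<bullet> a"
      using G that by (simp add: orthogonal_matrix_inner orth_subgroup_orthogonal)
    finally show ?thesis .
  qed
  with full show ?thesis
    unfolding orbit_polytope_full_dim_iff c_def by blast
qed

lemma orbit_support_pos_if_full_dim:
  fixes S :: "(real^'n^'n) set"
  assumes G: "orth_subgroup S" and F: "finite S"
    and full: "aff_dim (orbit_polytope S a) = CARD('n)" and "x \<noteq> 0"
  shows "0 < orbit_support S a x"
proof (rule ccontr)
  have "S \<noteq> {}"
    using orth_subgroup_one[OF G] by auto
  moreover assume "\<not> 0 < orbit_support S a x"
  ultimately have le: "\<forall>A\<in>S. (A *v a) \<bullet> x \<le> 0"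
    using F by (simp add: orbit_support_def not_less Max_le_iff)
  have "(\<Sum>A\<in>S. - ((A *v a) \<bullet> x)) = 0"
    using orbit_sum_eq_0[OF G full] by (simp add: sum_negf flip: inner_sum_left)
  then have "\<forall>A\<in>S. - ((A *v a) \<bullet> x) = 0"
    using sum_nonneg_eq_0_iff[OF F, of "\<lambda>A. - ((A *v a) \<bullet> x)"] le by simp
  then have "\<forall>A\<in>S. x \<bullet> (A *v a) = 0"
    by (simp add: inner_commute)
  with full \<open>x \<noteq> 0\<close> show False
    unfolding orbit_polytope_full_dim_iff by blast
qed

lemma full_dim_if_orbit_support_pos:
  fixes S :: "(real^'n^'n) set"
  assumes "S \<noteq> {}" and pos: "\<forall>x\<in>sphere 0 1. 0 < orbit_support S a x"
  shows "aff_dim (orbit_polytope S a) = CARD('n)"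
  unfolding orbit_polytope_full_dim_iff
proof (intro allI impI)
  fix u :: "real^'n" and b assume hyp: "\<forall>A\<in>S. u \<bullet> (A *v a) = b"
  show "u = 0"
  proof (rule ccontr)
    assume "u \<noteq> 0"
    define v where "v = u /\<^sub>R norm u"
    have "(\<lambda>A. (A *v a) \<bullet> v) ` S = {b / norm u}" "(\<lambda>A. (A *v a) \<bullet> - v) ` S = {- (b / norm u)}"
      using hyp \<open>S \<noteq> {}\<close> by (auto simp: v_def inner_commute divide_inverse)
    then have "orbit_support S a v = b / norm u" "orbit_support S a (- v) = - (b / norm u)"
      by (simp_all add: orbit_support_def)
    moreover have "v \<in> sphere 0 1" "- v \<in> sphere 0 1"
      using \<open>u \<noteq> 0\<close> by (auto simp: v_def)
    ultimately have "0 < b / norm u" "0 < - (b / norm u)"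
      using pos by metis+
    then show False by linarith
  qed
qed

lemma orbit_polytope_full_dim_iff_orbit_support_pos:
  fixes S :: "(real^'n^'n) set"
  assumes "orth_subgroup S" and "finite S"
  shows "aff_dim (orbit_polytope S a) = CARD('n) \<longleftrightarrow> (\<forall>x\<in>sphere 0 1. 0 < orbit_support S a x)"
proof
  assume full: "aff_dim (orbit_polytope S a) = CARD('n)"
  show "\<forall>x\<in>sphere 0 1. 0 < orbit_support S a x"
  proof
    fix x :: "real^'n" assume "x \<in> sphere 0 1"
    then have "x \<noteq> 0" by auto
    with full show "0 < orbit_support S a x"
      by (rule orbit_support_pos_if_full_dim[OF assms])
  qed
next
  have "S \<noteq> {}"
    using orth_subgroup_one[OF assms(1)] by auto
  then show "\<forall>x\<in>sphere 0 1. 0 < orbit_support S a x \<Longrightarrow> aff_dim (orbit_polytope S a) = CARD('n)"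
    by (rule full_dim_if_orbit_support_pos)
qed

lemma continuous_on_Max:
  fixes f :: "'i \<Rightarrow> 'a::topological_space \<Rightarrow> 'b::linorder_topology"
  assumes "finite I" "I \<noteq> {}" "\<And>i. i \<in> I \<Longrightarrow> continuous_on X (f i)"
  shows "continuous_on X (\<lambda>x. Max ((\<lambda>i. f i x) ` I))"
  using assms
proof (induction I rule: finite_ne_induct)
  case (insert i I)
  then show ?case
    by (simp add: continuous_on_max)
qed simp

lemma continuous_on_orbit_support:
  fixes S :: "(real^'n^'n) set"
  assumes "finite S" "S \<noteq> {}"
  shows "continuous_on X (\<lambda>p. orbit_support S (fst p) (snd p))"
  unfolding orbit_support_def
  by (intro continuous_on_Max assms continuous_intros linear_continuous_on
      bounded_linear_compose[OF matrix_vector_mul_bounded_linear bounded_linear_fst])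

lemma abs_orbit_support_le_1:
  fixes S :: "(real^'n^'n) set"
  assumes G: "orth_subgroup S" and F: "finite S" and "a \<in> sphere 0 1" "x \<in> sphere 0 1"
  shows "\<bar>orbit_support S a x\<bar> \<le> 1"
proof -
  have "\<bar>(A *v a) \<bullet> x\<bar> \<le> 1" if "A \<in> S" for A
    using Cauchy_Schwarz_ineq2[of "A *v a" x] assms that
    by (simp add: orthogonal_matrix_norm orth_subgroup_orthogonal)
  moreover have "orbit_support S a x \<in> (\<lambda>A. (A *v a) \<bullet> x) ` S"
    unfolding orbit_support_def using F orth_subgroup_one[OF G] by (intro Max_in) auto
  ultimately show ?thesis by auto
qed

lemma orbit_support_uniformly_pos:
  fixes S :: "(real^'n^'n) set"
  assumes "finite S" "S \<noteq> {}"
    and pos: "\<forall>a\<in>sphere 0 1. \<forall>x\<in>sphere 0 1. 0 < orbit_support S a x"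
  obtains \<delta> where "\<delta> > 0" "\<forall>a\<in>sphere 0 1. \<forall>x\<in>sphere 0 1. \<delta> \<le> orbit_support S a x"
proof -
  let ?K = "sphere (0::real^'n) 1 \<times> sphere (0::real^'n) 1"
  have "\<exists>p\<in>?K. \<forall>q\<in>?K. orbit_support S (fst p) (snd p) \<le> orbit_support S (fst q) (snd q)"
    using assms(1,2)
    by (intro continuous_attains_inf compact_Times compact_sphere continuous_on_orbit_support) auto
  then obtain p where "p \<in> ?K"
    and min: "\<forall>q\<in>?K. orbit_support S (fst p) (snd p) \<le> orbit_support S (fst q) (snd q)"
    by blast
  show thesis
  proof (rule that)
    show "0 < orbit_support S (fst p) (snd p)"
      using pos \<open>p \<in> ?K\<close> by auto
    show "\<forall>a\<in>sphere 0 1. \<forall>x\<in>sphere 0 1. orbit_support S (fst p) (snd p) \<le> orbit_support S a x"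
      using min by auto
  qed
qed

lemma Sup_div_Inf_le_inverse:
  fixes f :: "'a \<Rightarrow> real"
  assumes "K \<noteq> {}" "0 < \<delta>" "\<And>x. x \<in> K \<Longrightarrow> \<delta> \<le> f x" "\<And>x. x \<in> K \<Longrightarrow> f x \<le> 1"
  shows "\<delta> \<le> Inf (f ` K)" "Sup (f ` K) / Inf (f ` K) \<le> 1 / \<delta>"
proof -
  show Inf_ge: "\<delta> \<le> Inf (f ` K)"
    using assms by (intro cInf_greatest) auto
  have "Sup (f ` K) \<le> 1"
    using assms by (intro cSup_least) auto
  then have "Sup (f ` K) / Inf (f ` K) \<le> 1 / Inf (f ` K)"
    using Inf_ge \<open>0 < \<delta>\<close> by (intro divide_right_mono) auto
  also have "\<dots> \<le> 1 / \<delta>"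
    using Inf_ge \<open>0 < \<delta>\<close> by (intro divide_left_mono) auto
  finally show "Sup (f ` K) / Inf (f ` K) \<le> 1 / \<delta>" .
qed

lemma bounded_ratio_condition_iff_orbit_support_pos:
  fixes S :: "(real^'n^'n) set"
  assumes G: "orth_subgroup S" and F: "finite S"
  shows "bounded_ratio_condition S \<longleftrightarrow> (\<forall>a\<in>sphere 0 1. \<forall>x\<in>sphere 0 1. 0 < orbit_support S a x)"
proof -
  have ne: "S \<noteq> {}" using orth_subgroup_one[OF G] by auto
  have h: "support_function (orbit_polytope S a) = orbit_support S a" for a
    using F ne by (rule support_function_orbit_polytope)
  have bound: "\<bar>orbit_support S a x\<bar> \<le> 1" if "a \<in> sphere 0 1" "x \<in> sphere 0 1" for a x
    using abs_orbit_support_le_1[OF G F that] .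
  show ?thesis
  proof
    assume "bounded_ratio_condition S"
    show "\<forall>a\<in>sphere 0 1. \<forall>x\<in>sphere 0 1. 0 < orbit_support S a x"
    proof (intro ballI)
      fix a x :: "real^'n" assume a: "a \<in> sphere 0 1" and x: "x \<in> sphere 0 1"
      have "bdd_below (orbit_support S a ` sphere 0 1)"
        using bound[OF a] by (intro bdd_belowI2[of _ "-1"]) (auto simp: abs_le_iff)
      then have "Inf (orbit_support S a ` sphere 0 1) \<le> orbit_support S a x"
        using x by (intro cInf_lower) auto
      moreover have "0 < Inf (orbit_support S a ` sphere 0 1)"
        using \<open>bounded_ratio_condition S\<close> a by (auto simp: bounded_ratio_condition_def h)
      ultimately show "0 < orbit_support S a x" by simp
    qed
  next
    assume "\<forall>a\<in>sphere 0 1. \<forall>x\<in>sphere 0 1. 0 < orbit_support S a x"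
    then obtain \<delta> where \<delta>: "\<delta> > 0" "\<forall>a\<in>sphere 0 1. \<forall>x\<in>sphere 0 1. \<delta> \<le> orbit_support S a x"
      using orbit_support_uniformly_pos[OF F ne] by blast
    show "bounded_ratio_condition S"
      unfolding bounded_ratio_condition_def gamma_ratio_def h
    proof (intro exI[of _ "1 / \<delta>"] ballI conjI)
      fix a :: "real^'n" assume a: "a \<in> sphere 0 1"
      have "orbit_support S a x \<le> 1" if "x \<in> sphere 0 1" for x
        using bound[OF a that] by (simp add: abs_le_iff)
      then have ratio: "\<delta> \<le> Inf (orbit_support S a ` sphere 0 1)"
        "Sup (orbit_support S a ` sphere 0 1) / Inf (orbit_support S a ` sphere 0 1) \<le> 1 / \<delta>"
        using Sup_div_Inf_le_inverse[of "sphere 0 1" \<delta> "orbit_support S a"] \<delta> a by auto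
      from ratio(1) \<open>\<delta> > 0\<close> show "0 < Inf (orbit_support S a ` sphere 0 1)"
        by linarith
      from ratio(2)
      show "Sup (orbit_support S a ` sphere 0 1) / Inf (orbit_support S a ` sphere 0 1) \<le> 1 / \<delta>" .
    qed
  qed
qed

theorem proposition2p1:
  fixes S :: "(real^'n^'n) set"
  assumes "orth_subgroup S" and "discrete S"
  shows "spanning_property S \<longleftrightarrow> bounded_ratio_condition S"
proof -
  have F: "finite S"
    using assms by (rule finite_discrete_orth_subgroup)
  have "polytope (orbit_polytope S a)" for a
    unfolding polytope_def orbit_polytope_def using F by blast
  then have "spanning_property S \<longleftrightarrow> (\<forall>a\<in>sphere 0 1. \<forall>x\<in>sphere 0 1. 0 < orbit_support S a x)"
    unfolding spanning_property_def
    by (simp add: orbit_polytope_full_dim_iff_orbit_support_pos[OF assms(1) F])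
  also have "\<dots> \<longleftrightarrow> bounded_ratio_condition S"
    by (simp add: bounded_ratio_condition_iff_orbit_support_pos[OF assms(1) F])
  finally show ?thesis .
qed

end
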